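(* $\mathsf{LKur}\subseteq\mathsf{GKur}$.
   Context: $\mathsf{MIPC}$ is the smallest set of formulas in the bimodal language $\mathcal{L}_{\forall\exists}$ containing all theorems of $\mathsf{IPC}$; $\forall(p\wedge q)\leftrightarrow(\forall p\wedge\forall q)$, $\forall p\to p$, $\forall p\to\forall\forall p$; $\exists(p\vee q)\leftrightarrow(\exists p\vee\exists q)$, $p\to\exists p$, $\exists\exists p\to\exists p$, $(\exists p\wedge\exists q)\to\exists(\exists p\wedge q)$; $\exists\forall p\to\forall p$, $\exists p\to\forall\exists p$; closed under modus ponens, substitution and $\varphi/\forall\varphi$. $\mathsf{Kur}=\mathsf{MIPC}+\forall\neg\neg p\to\neg\neg\forall p$. $\mathsf{MS4}$ is the smallest set of formulas in the classical bimodal language $\mathcal{L}_{\Box\forall}$ containing all classical tautologies, the $\mathsf{S4}$ axioms for $\Box$, the $\mathsf{S5}$ axioms for $\forall$, and $\Box\forall p\to\forall\Box p$, closed under modus ponens, substitution, $\Box$- and $\forall$-necessitation; $\Diamond=\neg\Box\neg$. $\mathsf{LKur}=\mathsf{MS4}+\Box\forall\Diamond\Box p\to\Diamond\forall p$. $\mathsf{GKur}=\mathsf{MS4}+\{\varphi^t:\mathsf{Kur}\vdash\varphi\}$, with Gödel translation $\bot^t=\bot$, $p^t=\Box p$, $(\varphi\wedge\psi)^t=\varphi^t\wedge\psi^t$, $(\varphi\vee\psi)^t=\varphi^t\vee\psi^t$, $(\varphi\to\psi)^t=\Box(\neg\varphi^t\vee\psi^t)$, $(\forall\varphi)^t=\Box\forall\varphi^t$,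 $(\exists\varphi)^t=\neg\forall\neg\varphi^t$. *)

theory Defs
  imports Main
begin

datatype ifm = IVar nat | IBot | IAnd ifm ifm | IOr ifm ifm | IImp ifm ifm | IAll ifm | IEx ifm

definition INeg :: "ifm \<Rightarrow> ifm" where "INeg a = IImp a IBot"
definition IIff :: "ifm \<Rightarrow> ifm \<Rightarrow> ifm" where "IIff a b = IAnd (IImp a b) (IImp b a)"

primrec isubst :: "(nat \<Rightarrow> ifm) \<Rightarrow> ifm \<Rightarrow> ifm" where
  "isubst s (IVar n) = s n"
| "isubst s IBot = IBot"
| "isubst s (IAnd a b) = IAnd (isubst s a) (isubst s b)"
| "isubst s (IOr a b) = IOr (isubst s a) (isubst s b)"
| "isubst s (IImp a b) = IImp (isubst s a) (isubst s b)"
| "isubst s (IAll a) = IAll (isubst s a)"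
| "isubst s (IEx a) = IEx (isubst s a)"

text \<open>Axiom schemes of a standard Hilbert calculus for IPC (instantiated with
arbitrary formulas of the bimodal language); together with modus ponens they
generate all (substitution instances of) theorems of IPC.\<close>
inductive ipc_ax :: "ifm \<Rightarrow> bool" where
  "ipc_ax (IImp a (IImp b a))"
| "ipc_ax (IImp (IImp a (IImp b c)) (IImp (IImp a b) (IImp a c)))"
| "ipc_ax (IImp (IAnd a b) a)"
| "ipc_ax (IImp (IAnd a b) b)"
| "ipc_ax (IImp a (IImp b (IAnd a b)))"
| "ipc_ax (IImp a (IOr a b))"
| "ipc_ax (IImp b (IOr a b))"
| "ipc_ax (IImp (IImp a c) (IImp (IImp b c) (IImp (IOr a b) c)))"
| "ipc_ax (IImp IBot a)"

abbreviation "ip \<equiv> IVar 0"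
abbreviation "iq \<equiv> IVar 1"

definition mipc_axioms :: "ifm set" where
  "mipc_axioms =
   { IIff (IAll (IAnd ip iq)) (IAnd (IAll ip) (IAll iq)),
     IImp (IAll ip) ip,
     IImp (IAll ip) (IAll (IAll ip)),
     IIff (IEx (IOr ip iq)) (IOr (IEx ip) (IEx iq)),
     IImp ip (IEx ip),
     IImp (IEx (IEx ip)) (IEx ip),
     IImp (IAnd (IEx ip) (IEx iq)) (IEx (IAnd (IEx ip) iq)),
     IImp (IEx (IAll ip)) (IAll ip),
     IImp (IEx ip) (IAll (IEx ip)) }"

inductive_set MIPC_ext :: "ifm set \<Rightarrow> ifm set" for G :: "ifm set" where
  ipc: "ipc_ax a \<Longrightarrow> a \<in> MIPC_ext G"
| ax: "a \<in> mipc_axioms \<Longrightarrow> a \<in> MIPC_ext G"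
| extra: "a \<in> G \<Longrightarrow> a \<in> MIPC_ext G"
| mp: "a \<in> MIPC_ext G \<Longrightarrow> IImp a b \<in> MIPC_ext G \<Longrightarrow> b \<in> MIPC_ext G"
| sub: "a \<in> MIPC_ext G \<Longrightarrow> isubst s a \<in> MIPC_ext G"
| gen: "a \<in> MIPC_ext G \<Longrightarrow> IAll a \<in> MIPC_ext G"

definition MIPC :: "ifm set" where "MIPC = MIPC_ext {}"

definition Kur :: "ifm set" where
  "Kur = MIPC_ext {IImp (IAll (INeg (INeg ip))) (INeg (INeg (IAll ip)))}"

datatype cfm = CVar nat | CBot | CAnd cfm cfm | COr cfm cfm | CImp cfm cfm | CBox cfm | CAll cfm

definition CNeg :: "cfm \<Rightarrow> cfm" where "CNeg a = CImp a CBot"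
definition CDia :: "cfm \<Rightarrow> cfm" where "CDia a = CNeg (CBox (CNeg a))"
definition CEx :: "cfm \<Rightarrow> cfm" where "CEx a = CNeg (CAll (CNeg a))"

primrec csubst :: "(nat \<Rightarrow> cfm) \<Rightarrow> cfm \<Rightarrow> cfm" where
  "csubst s (CVar n) = s n"
| "csubst s CBot = CBot"
| "csubst s (CAnd a b) = CAnd (csubst s a) (csubst s b)"
| "csubst s (COr a b) = COr (csubst s a) (csubst s b)"
| "csubst s (CImp a b) = CImp (csubst s a) (csubst s b)"
| "csubst s (CBox a) = CBox (csubst s a)"
| "csubst s (CAll a) = CAll (csubst s a)"

primrec peval :: "(cfm \<Rightarrow> bool) \<Rightarrow> cfm \<Rightarrow> bool" where
  "peval v (CVar n) = v (CVar n)"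
| "peval v CBot = False"
| "peval v (CAnd a b) = (peval v a \<and> peval v b)"
| "peval v (COr a b) = (peval v a \<or> peval v b)"
| "peval v (CImp a b) = (peval v a \<longrightarrow> peval v b)"
| "peval v (CBox a) = v (CBox a)"
| "peval v (CAll a) = v (CAll a)"

definition taut :: "cfm \<Rightarrow> bool" where "taut a \<longleftrightarrow> (\<forall>v. peval v a)"

abbreviation "cp \<equiv> CVar 0"
abbreviation "cq \<equiv> CVar 1"

definition ms4_axioms :: "cfm set" where
  "ms4_axioms =
   { CImp (CBox (CImp cp cq)) (CImp (CBox cp) (CBox cq)),
     CImp (CBox cp) cp,
     CImp (CBox cp) (CBox (CBox cp)),
     CImp (CAll (CImp cp cq)) (CImp (CAll cp) (CAll cq)),
     CImp (CAll cp) cp,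
     CImp (CAll cp) (CAll (CAll cp)),
     CImp (CEx cp) (CAll (CEx cp)),
     CImp (CBox (CAll cp)) (CAll (CBox cp)) }"

inductive_set MS4_ext :: "cfm set \<Rightarrow> cfm set" for G :: "cfm set" where
  taut: "taut a \<Longrightarrow> a \<in> MS4_ext G"
| ax: "a \<in> ms4_axioms \<Longrightarrow> a \<in> MS4_ext G"
| extra: "a \<in> G \<Longrightarrow> a \<in> MS4_ext G"
| mp: "a \<in> MS4_ext G \<Longrightarrow> CImp a b \<in> MS4_ext G \<Longrightarrow> b \<in> MS4_ext G"
| sub: "a \<in> MS4_ext G \<Longrightarrow> csubst s a \<in> MS4_ext G"
| nec_box: "a \<in> MS4_ext G \<Longrightarrow> CBox a \<in> MS4_ext G"
| nec_all: "a \<in> MS4_ext G \<Longrightarrow> CAll a \<in> MS4_ext G"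

definition MS4 :: "cfm set" where "MS4 = MS4_ext {}"

definition LKur :: "cfm set" where
  "LKur = MS4_ext {CImp (CBox (CAll (CDia (CBox cp)))) (CDia (CAll cp))}"

primrec gt :: "ifm \<Rightarrow> cfm" where
  "gt IBot = CBot"
| "gt (IVar n) = CBox (CVar n)"
| "gt (IAnd a b) = CAnd (gt a) (gt b)"
| "gt (IOr a b) = COr (gt a) (gt b)"
| "gt (IImp a b) = CBox (COr (CNeg (gt a)) (gt b))"
| "gt (IAll a) = CBox (CAll (gt a))"
| "gt (IEx a) = CNeg (CAll (CNeg (gt a)))"

definition GKur :: "cfm set" where
  "GKur = MS4_ext (gt ` Kur)"

end

theory Submission
  imports Defs
begin

text \<open>Up to MS4-equivalence the Goedel translation sends \<open>\<not>\<not>\<phi>\<close> to \<open>\<box>\<diamond>\<phi>\<^sup>t\<close>,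
so the translated Kuroda axiom reads \<open>\<box>\<forall>\<box>\<diamond>\<box>p \<rightarrow> \<box>\<diamond>\<box>\<forall>\<box>p\<close>. The LKur axiom
\<open>\<box>\<forall>\<diamond>\<box>p \<rightarrow> \<diamond>\<forall>p\<close> follows by strengthening the antecedent with \<open>\<box>\<forall>a \<rightarrow> \<box>\<forall>\<box>a\<close>
(from 4 and \<open>\<box>\<forall>a \<rightarrow> \<forall>\<box>a\<close>) and weakening the consequent with T and
\<open>\<box>\<forall>\<box>p \<rightarrow> \<forall>p\<close>.\<close>

lemma MS4_ext_subsetI:
  assumes "G \<subseteq> MS4_ext H"
  shows "MS4_ext G \<subseteq> MS4_ext H"
proof
  fix a assume "a \<in> MS4_ext G"
  then show "a \<in> MS4_ext H"
    by induction (use assms in \<open>auto intro: MS4_ext.intros\<close>)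
qed

lemma ms4_axiom_instance:
  "x \<in> ms4_axioms \<Longrightarrow> csubst (\<lambda>n. if n = 0 then a else b) x \<in> MS4_ext G"
  by (intro MS4_ext.sub MS4_ext.ax)

lemma box_K: "CImp (CBox (CImp a b)) (CImp (CBox a) (CBox b)) \<in> MS4_ext G"
  using ms4_axiom_instance[of "CImp (CBox (CImp cp cq)) (CImp (CBox cp) (CBox cq))" a b]
  by (simp add: ms4_axioms_def)

lemma box_T: "CImp (CBox a) a \<in> MS4_ext G"
  using ms4_axiom_instance[of "CImp (CBox cp) cp" a a] by (simp add: ms4_axioms_def)

lemma box_4: "CImp (CBox a) (CBox (CBox a)) \<in> MS4_ext G"
  using ms4_axiom_instance[of "CImp (CBox cp) (CBox (CBox cp))" a a] by (simp add: ms4_axioms_def)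

lemma all_K: "CImp (CAll (CImp a b)) (CImp (CAll a) (CAll b)) \<in> MS4_ext G"
  using ms4_axiom_instance[of "CImp (CAll (CImp cp cq)) (CImp (CAll cp) (CAll cq))" a b]
  by (simp add: ms4_axioms_def)

lemma box_all_imp_all_box: "CImp (CBox (CAll a)) (CAll (CBox a)) \<in> MS4_ext G"
  using ms4_axiom_instance[of "CImp (CBox (CAll cp)) (CAll (CBox cp))" a a]
  by (simp add: ms4_axioms_def)

lemma mp_taut: "a \<in> MS4_ext G \<Longrightarrow> taut (CImp a b) \<Longrightarrow> b \<in> MS4_ext G"
  by (metis MS4_ext.mp MS4_ext.taut)

lemma imp_trans:
  assumes "CImp a b \<in> MS4_ext G" and "CImp b c \<in> MS4_ext G"
  shows "CImp a c \<in> MS4_ext G"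
proof -
  have "CImp (CImp b c) (CImp a c) \<in> MS4_ext G"
    using assms(1) by (rule mp_taut) (simp add: taut_def)
  then show ?thesis using assms(2) by (rule MS4_ext.mp[rotated])
qed

lemma box_mono: "CImp a b \<in> MS4_ext G \<Longrightarrow> CImp (CBox a) (CBox b) \<in> MS4_ext G"
  by (metis MS4_ext.mp MS4_ext.nec_box box_K)

lemma all_mono: "CImp a b \<in> MS4_ext G \<Longrightarrow> CImp (CAll a) (CAll b) \<in> MS4_ext G"
  by (metis MS4_ext.mp MS4_ext.nec_all all_K)

lemma box_mono_taut: "taut (CImp a b) \<Longrightarrow> CImp (CBox a) (CBox b) \<in> MS4_ext G"
  by (intro box_mono MS4_ext.taut)

lemma dia_mono:
  assumes "CImp a b \<in> MS4_ext G"
  shows "CImp (CDia a) (CDia b) \<in> MS4_ext G"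
proof -
  have "CImp (CNeg b) (CNeg a) \<in> MS4_ext G"
    using assms by (rule mp_taut) (auto simp: taut_def CNeg_def)
  then have "CImp (CBox (CNeg b)) (CBox (CNeg a)) \<in> MS4_ext G"
    by (rule box_mono)
  then show ?thesis
    by (rule mp_taut) (auto simp: taut_def CNeg_def CDia_def)
qed

lemma box_all_imp_box_all_box: "CImp (CBox (CAll a)) (CBox (CAll (CBox a))) \<in> MS4_ext G"
  using box_4 box_mono[OF box_all_imp_all_box] by (rule imp_trans)

lemma box_all_box_imp_all: "CImp (CBox (CAll (CBox a))) (CAll a) \<in> MS4_ext G"
  using box_T all_mono[OF box_T] by (rule imp_trans)

lemma gt_IImpD:
  "gt (IImp a b) \<in> MS4_ext G \<Longrightarrow> CImp (gt a) (gt b) \<in> MS4_ext G"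
  by (auto intro: MS4_ext.mp[OF _ box_T] mp_taut simp: taut_def CNeg_def)

lemma gt_not_not_imp_box_dia:
  "CImp (gt (INeg (INeg a))) (CBox (CDia (gt a))) \<in> MS4_ext G"
proof -
  have "CImp (CBox (CNeg (gt a))) (CBox (COr (CNeg (gt a)) CBot)) \<in> MS4_ext G"
    by (rule box_mono_taut) (simp add: taut_def CNeg_def)
  then have "CImp (COr (CNeg (CBox (COr (CNeg (gt a)) CBot))) CBot) (CDia (gt a)) \<in> MS4_ext G"
    by (rule mp_taut) (auto simp: taut_def CNeg_def CDia_def)
  then show ?thesis
    unfolding INeg_def by (simp add: box_mono)
qed

lemma box_dia_imp_gt_not_not:
  "CImp (CBox (CDia (gt a))) (gt (INeg (INeg a))) \<in> MS4_ext G"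
proof -
  have "CImp (CBox (COr (CNeg (gt a)) CBot)) (CBox (CNeg (gt a))) \<in> MS4_ext G"
    by (rule box_mono_taut) (simp add: taut_def CNeg_def)
  then have "CImp (CDia (gt a)) (COr (CNeg (CBox (COr (CNeg (gt a)) CBot))) CBot) \<in> MS4_ext G"
    by (rule mp_taut) (auto simp: taut_def CNeg_def CDia_def)
  then show ?thesis
    unfolding INeg_def by (simp add: box_mono)
qed

lemma gt_Kur_in_GKur: "a \<in> Kur \<Longrightarrow> gt a \<in> GKur"
  unfolding GKur_def by (intro MS4_ext.extra imageI)

lemma kuroda_in_Kur: "IImp (IAll (INeg (INeg ip))) (INeg (INeg (IAll ip))) \<in> Kur"
  unfolding Kur_def by (rule MIPC_ext.extra) simp

lemma LKur_axiom_in_GKur: "CImp (CBox (CAll (CDia (CBox cp)))) (CDia (CAll cp)) \<in> GKur"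
proof -
  let ?L = "MS4_ext (gt ` Kur)"
  have premise: "CImp (CBox (CAll (CDia (CBox cp)))) (gt (IAll (INeg (INeg ip)))) \<in> ?L"
    using box_mono[OF all_mono[OF box_dia_imp_gt_not_not[of ip, simplified]]]
    unfolding gt.simps by (rule imp_trans[OF box_all_imp_box_all_box])
  have kuroda: "CImp (gt (IAll (INeg (INeg ip)))) (gt (INeg (INeg (IAll ip)))) \<in> ?L"
    using gt_Kur_in_GKur[OF kuroda_in_Kur] unfolding GKur_def by (rule gt_IImpD)
  have conclusion: "CImp (gt (INeg (INeg (IAll ip)))) (CDia (CAll cp)) \<in> ?L"
    using gt_not_not_imp_box_dia[of "IAll ip", simplified]
    by (rule imp_trans[OF _ imp_trans[OF box_T dia_mono[OF box_all_box_imp_all]]])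
  show ?thesis
    unfolding GKur_def by (rule imp_trans[OF imp_trans[OF premise kuroda] conclusion])
qed

theorem lemma4p7:
  shows "LKur \<subseteq> GKur"
  unfolding LKur_def using LKur_axiom_in_GKur unfolding GKur_def
  by (intro MS4_ext_subsetI) simp

end
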